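(* Let $n,p\ge1$ and $\alpha\in\widehat F_{(n,p)}$, with fine-degree components $\alpha_{\underline{k}}$. If $\lambda_i(\alpha)=0$ for some $i\in\{1,\dots,n\}$, then $\alpha_{\underline{k}}=0$ unless the $i$-th column of $\mathrm{supp}(\underline{k})$ is nonempty. Similarly, if $\rho_j(\alpha)=0$ for some $j\in\{1,\dots,p\}$, then $\alpha_{\underline{k}}=0$ unless the $j$-th line of $\mathrm{supp}(\underline{k})$ is nonempty.
   Context: Work over a field of characteristic $0$. $F_{(m,q)}$ is the Lie algebra generated by $x_{i,j}$, $(i,j)\in\{1,\dots,m\}\times\{1,\dots,q\}$, with defining relations $[x_{i,j},x_{i',j'}]=0$ whenever $i\ne i'$ and $j\ne j'$. It is graded by the fine degree in $\bigoplus_{(i,j)}\mathbb{N}\epsilon_{(i,j)}$ with $\deg x_{i,j}=\epsilon_{(i,j)}$, and by total degree ($\deg x_{i,j}=1$); $\widehat F_{(m,q)}$ is the completion for the total degree. For $\underline{k}=\sum k_{(i,j)}\epsilon_{(i,j)}$, $\mathrm{supp}(\underline{k})=\{(i,j)\mid k_{(i,j)}\ne0\}$; the $i$-th column of a set $S$ is $S\cap(\{i\}\times\{1,\dots,p\})$, the $j$-th line is $S\cap(\{1,\dots,n\}\times\{j\})$. $\lambda_i:\widehat F_{(n,p)}\to\widehat F_{(n-1,p)}$ is the continuous Lie morphism with $x_{i',j'}\mapsto x_{i',j'}$ if $i'<i$, $0$ if $i'=i$, $x_{i'-1,j'}$ if $i'>i$; $\rho_j:\widehat F_{(n,p)}\to\widehat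 F_{(n,p-1)}$ is defined analogously in the second index. *)

theory Defs
  imports Main
begin

text \<open>Formal Lie terms over a scalar field 'a, with generators Gen i j (= x_{i,j}).\<close>
datatype 'a lie = Gen nat nat | Zero | Add "'a lie" "'a lie" | Smul 'a "'a lie" | Br "'a lie" "'a lie"

fun wf_lie :: "nat \<Rightarrow> nat \<Rightarrow> 'a lie \<Rightarrow> bool" where
  "wf_lie n p (Gen i j) = (1 \<le> i \<and> i \<le> n \<and> 1 \<le> j \<and> j \<le> p)"
| "wf_lie n p Zero = True"
| "wf_lie n p (Add s t) = (wf_lie n p s \<and> wf_lie n p t)"
| "wf_lie n p (Smul a t) = wf_lie n p t"
| "wf_lie n p (Br s t) = (wf_lie n p s \<and> wf_lie n p t)"

text \<open>The congruence presenting F_(n,p): Lie algebra axioms plus the defining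
  relations [x_{i,j}, x_{i',j'}] = 0 for i <> i' and j <> j'.\<close>
inductive lie_eqv :: "nat \<Rightarrow> nat \<Rightarrow> 'a::field lie \<Rightarrow> 'a lie \<Rightarrow> bool" for n p where
  refl: "lie_eqv n p t t"
| sym: "lie_eqv n p s t \<Longrightarrow> lie_eqv n p t s"
| trans: "lie_eqv n p s t \<Longrightarrow> lie_eqv n p t u \<Longrightarrow> lie_eqv n p s u"
| cong_add: "lie_eqv n p s s' \<Longrightarrow> lie_eqv n p t t' \<Longrightarrow> lie_eqv n p (Add s t) (Add s' t')"
| cong_smul: "lie_eqv n p s s' \<Longrightarrow> lie_eqv n p (Smul a s) (Smul a s')"
| cong_br: "lie_eqv n p s s' \<Longrightarrow> lie_eqv n p t t' \<Longrightarrow> lie_eqv n p (Br s t) (Br s' t')"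
| add_assoc: "lie_eqv n p (Add (Add s t) u) (Add s (Add t u))"
| add_comm: "lie_eqv n p (Add s t) (Add t s)"
| add_zero: "lie_eqv n p (Add t Zero) t"
| add_neg: "lie_eqv n p (Add t (Smul (-1) t)) Zero"
| smul_one: "lie_eqv n p (Smul 1 t) t"
| smul_mult: "lie_eqv n p (Smul a (Smul b t)) (Smul (a * b) t)"
| smul_add_scalar: "lie_eqv n p (Smul (a + b) t) (Add (Smul a t) (Smul b t))"
| smul_add: "lie_eqv n p (Smul a (Add s t)) (Add (Smul a s) (Smul a t))"
| br_add_left: "lie_eqv n p (Br (Add s t) u) (Add (Br s u) (Br t u))"
| br_smul_left: "lie_eqv n p (Br (Smul a s) t) (Smul a (Br s t))"
| br_alt: "lie_eqv n p (Br t t) Zero"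
| jacobi: "lie_eqv n p (Add (Br s (Br t u)) (Add (Br t (Br u s)) (Br u (Br s t)))) Zero"
| rel: "\<lbrakk>1 \<le> i; i \<le> n; 1 \<le> i'; i' \<le> n; 1 \<le> j; j \<le> p; 1 \<le> j'; j' \<le> p;
         i \<noteq> i'; j \<noteq> j'\<rbrakk> \<Longrightarrow> lie_eqv n p (Br (Gen i j) (Gen i' j')) Zero"

text \<open>Fine degrees: elements of the free commutative monoid on {1..n} x {1..p}.\<close>
type_synonym fdeg = "nat \<times> nat \<Rightarrow> nat"

definition fsupp :: "fdeg \<Rightarrow> (nat \<times> nat) set" where
  "fsupp k = {x. k x \<noteq> 0}"

definition degs :: "nat \<Rightarrow> nat \<Rightarrow> fdeg set" where
  "degs n p = {k. fsupp k \<subseteq> {1..n} \<times> {1..p}}"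

definition tdeg :: "nat \<Rightarrow> nat \<Rightarrow> fdeg \<Rightarrow> nat" where
  "tdeg n p k = (\<Sum>x\<in>{1..n} \<times> {1..p}. k x)"

definition column :: "nat \<Rightarrow> nat \<Rightarrow> (nat \<times> nat) set \<Rightarrow> (nat \<times> nat) set" where
  "column p i S = S \<inter> ({i} \<times> {1..p})"

definition line :: "nat \<Rightarrow> nat \<Rightarrow> (nat \<times> nat) set \<Rightarrow> (nat \<times> nat) set" where
  "line n j S = S \<inter> ({1..n} \<times> {j})"

inductive homog :: "'a lie \<Rightarrow> fdeg \<Rightarrow> bool" where
  "homog (Gen i j) (\<lambda>x. if x = (i, j) then 1 else 0)"
| "homog Zero k"
| "homog s k \<Longrightarrow> homog t k \<Longrightarrow> homog (Add s t) k"
| "homog t k \<Longrightarrow> homog (Smul a t) k"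
| "homog s k1 \<Longrightarrow> homog t k2 \<Longrightarrow> homog (Br s t) (\<lambda>x. k1 x + k2 x)"

text \<open>An element of the completion of F_(n,p) is given by its family of fine-degree
  components alpha k in F_(n,p)_k (k ranging over degs n p).\<close>
definition in_completion :: "nat \<Rightarrow> nat \<Rightarrow> (fdeg \<Rightarrow> 'a lie) \<Rightarrow> bool" where
  "in_completion n p \<alpha> \<longleftrightarrow> (\<forall>k\<in>degs n p. wf_lie n p (\<alpha> k) \<and> homog (\<alpha> k) k)"

definition lsum :: "'b set \<Rightarrow> ('b \<Rightarrow> 'a lie) \<Rightarrow> 'a lie" where
  "lsum S f = foldr (\<lambda>x t. Add (f x) t) (SOME xs. distinct xs \<and> set xs = S) Zero"

fun lam :: "nat \<Rightarrow> 'a lie \<Rightarrow> 'a lie" where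
  "lam i (Gen i' j') = (if i' < i then Gen i' j' else if i' = i then Zero else Gen (i' - 1) j')"
| "lam i Zero = Zero"
| "lam i (Add s t) = Add (lam i s) (lam i t)"
| "lam i (Smul a t) = Smul a (lam i t)"
| "lam i (Br s t) = Br (lam i s) (lam i t)"

fun rho :: "nat \<Rightarrow> 'a lie \<Rightarrow> 'a lie" where
  "rho j (Gen i' j') = (if j' < j then Gen i' j' else if j' = j then Zero else Gen i' (j' - 1))"
| "rho j Zero = Zero"
| "rho j (Add s t) = Add (rho j s) (rho j t)"
| "rho j (Smul a t) = Smul a (rho j t)"
| "rho j (Br s t) = Br (rho j s) (rho j t)"

definition lam_deg :: "nat \<Rightarrow> fdeg \<Rightarrow> fdeg" where
  "lam_deg i k = (\<lambda>(a, b). if a < i then k (a, b) else k (a + 1, b))"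

definition rho_deg :: "nat \<Rightarrow> fdeg \<Rightarrow> fdeg" where
  "rho_deg j k = (\<lambda>(a, b). if b < j then k (a, b) else k (a, b + 1))"

text \<open>Continuous extensions to the completions (both maps preserve total degree, so the
  component of fine degree k' of the image is the finite sum of the images of the
  components alpha k with the same total degree whose image degree is k').\<close>
definition lam_hat :: "nat \<Rightarrow> nat \<Rightarrow> nat \<Rightarrow> (fdeg \<Rightarrow> 'a lie) \<Rightarrow> fdeg \<Rightarrow> 'a lie" where
  "lam_hat n p i \<alpha> k' =
     lsum {k \<in> degs n p. tdeg n p k = tdeg (n - 1) p k' \<and> lam_deg i k = k'} (\<lambda>k. lam i (\<alpha> k))"

definition rho_hat :: "nat \<Rightarrow> nat \<Rightarrow> nat \<Rightarrow> (fdeg \<Rightarrow> 'a lie) \<Rightarrow> fdeg \<Rightarrow> 'a lie" where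
  "rho_hat n p j \<alpha> k' =
     lsum {k \<in> degs n p. tdeg n p k = tdeg n (p - 1) k' \<and> rho_deg j k = k'} (\<lambda>k. rho j (\<alpha> k))"

end

theory Submission
  imports Defs
begin

text \<open>On fine degrees \<lambda>_i deletes the i-th column, so the total-degree constraint in
  \<open>lam_hat\<close> admits only degrees with empty i-th column.  If k has empty i-th column, it is
  therefore the only degree contributing to the component of \<lambda>_i(\<alpha>) of degree \<lambda>_i(k),
  and that component is \<lambda>_i(\<alpha>_k) alone.  On terms avoiding the i-th column, \<lambda>_i has a
  left inverse which is a Lie morphism F_(n-1,p) \<rightarrow> F_(n,p): the relabelling
  x_(a,b) \<mapsto> x_(skip i a, b), which respects the defining relations because \<open>skip i\<close> is
  injective.  Hence \<lambda>_i(\<alpha>) = 0 forces \<alpha>_k = 0.  Lines are handled symmetrically.\<close>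

definition skip :: "nat \<Rightarrow> nat \<Rightarrow> nat" where
  "skip i a = (if a < i then a else a + 1)"

lemma inj_skip: "inj (skip i)"
  by (auto simp: inj_def skip_def split: if_splits)

lemma range_skip: "range (skip i) = - {i}"
proof -
  have "a \<in> range (skip i)" if "a \<noteq> i" for a
  proof (cases "a < i")
    case True
    then show ?thesis by (simp add: skip_def range_eqI[of _ _ a])
  next
    case False
    with that have "skip i (a - 1) = a" by (simp add: skip_def)
    then show ?thesis by (metis rangeI)
  qed
  then show ?thesis by (auto simp: skip_def split: if_splits)
qed

lemma vimage_skip_atLeastAtMost:
  assumes "i \<in> {1..n}"
  shows "skip i -` {1..n} = {1..n - 1}"
  using assms by (auto simp: skip_def split: if_splits)

lemma range_map_prod: "range (map_prod f g) = range f \<times> range g"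
  by (metis UNIV_Times_UNIV map_prod_surj_on)

lemma vimage_map_prod_Times: "map_prod f g -` (A \<times> B) = f -` A \<times> g -` B"
  by auto

fun relabel :: "(nat \<Rightarrow> nat) \<Rightarrow> (nat \<Rightarrow> nat) \<Rightarrow> 'a lie \<Rightarrow> 'a lie" where
  "relabel f g (Gen i j) = Gen (f i) (g j)"
| "relabel f g Zero = Zero"
| "relabel f g (Add s t) = Add (relabel f g s) (relabel f g t)"
| "relabel f g (Smul a t) = Smul a (relabel f g t)"
| "relabel f g (Br s t) = Br (relabel f g s) (relabel f g t)"

lemma lie_eqv_relabel:
  assumes "lie_eqv n p s t"
    and "inj_on f {1..n}" "inj_on g {1..p}" "f ` {1..n} \<subseteq> {1..n'}" "g ` {1..p} \<subseteq> {1..p'}"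
  shows "lie_eqv n' p' (relabel f g s) (relabel f g t)"
  using assms(1)
proof (induction rule: lie_eqv.induct)
  case (rel i i' j j')
  have "f i \<noteq> f i'" "g j \<noteq> g j'"
    using rel assms(2,3) by (auto dest: inj_onD)
  moreover have "i \<in> {1..n}" "i' \<in> {1..n}" "j \<in> {1..p}" "j' \<in> {1..p}"
    using rel by auto
  then have "f i \<in> {1..n'}" "f i' \<in> {1..n'}" "g j \<in> {1..p'}" "g j' \<in> {1..p'}"
    using assms(4,5) by blast+
  ultimately show ?case
    by (simp add: lie_eqv.rel)
qed (auto intro: lie_eqv.intros)

fun lie_gens :: "'a lie \<Rightarrow> (nat \<times> nat) set" where
  "lie_gens (Gen i j) = {(i, j)}"
| "lie_gens Zero = {}"
| "lie_gens (Add s t) = lie_gens s \<union> lie_gens t"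
| "lie_gens (Smul a t) = lie_gens t"
| "lie_gens (Br s t) = lie_gens s \<union> lie_gens t"

lemma homog_lie_gens_subset_fsupp: "homog t k \<Longrightarrow> lie_gens t \<subseteq> fsupp k"
  by (induction rule: homog.induct) (auto simp: fsupp_def)

lemma relabel_skip_lam: "(\<forall>x\<in>lie_gens t. fst x \<noteq> i) \<Longrightarrow> relabel (skip i) id (lam i t) = t"
  by (induction t) (auto simp: skip_def)

lemma relabel_skip_rho: "(\<forall>x\<in>lie_gens t. snd x \<noteq> j) \<Longrightarrow> relabel id (skip j) (rho j t) = t"
  by (induction t) (auto simp: skip_def)

lemma lsum_singleton: "lsum {k} f = Add (f k) Zero"
proof -
  have "distinct xs \<and> set xs = {k} \<longleftrightarrow> xs = [k]" for xs
    by (cases xs; cases "tl xs") auto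
  then show ?thesis
    unfolding lsum_def by simp
qed

lemma sum_split_inj_vimage:
  assumes "inj \<sigma>" "finite B"
  shows "(\<Sum>x\<in>B. k x) = (\<Sum>y\<in>\<sigma> -` B. k (\<sigma> y)) + (\<Sum>x\<in>B - range \<sigma>. k x)"
proof -
  have "(\<Sum>x\<in>B. k x) = (\<Sum>x\<in>B \<inter> range \<sigma>. k x) + (\<Sum>x\<in>B - range \<sigma>. k x)"
    using assms(2) by (rule sum.Int_Diff)
  also have "(\<Sum>x\<in>B \<inter> range \<sigma>. k x) = (\<Sum>y\<in>\<sigma> -` B. k (\<sigma> y))"
    using sum.reindex[OF inj_on_subset[OF assms(1) subset_UNIV], of k "\<sigma> -` B"] by simp
  finally show ?thesis .
qed

lemma precomp_fibre_eq_singleton: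
  fixes k :: "'b \<Rightarrow> nat"
  assumes "inj \<sigma>" "finite B" "{x. k x \<noteq> 0} \<subseteq> B" "\<forall>x\<in>B - range \<sigma>. k x = 0"
  shows "{k'. {x. k' x \<noteq> 0} \<subseteq> B \<and> (\<Sum>x\<in>B. k' x) = (\<Sum>y\<in>\<sigma> -` B. k (\<sigma> y)) \<and> k' \<circ> \<sigma> = k \<circ> \<sigma>} = {k}"
    (is "?fibre = _")
proof (intro equalityI subsetI)
  fix k' assume "k' \<in> ?fibre"
  then have supp: "{x. k' x \<noteq> 0} \<subseteq> B" and total: "(\<Sum>x\<in>B. k' x) = (\<Sum>y\<in>\<sigma> -` B. k (\<sigma> y))"
    and on_range: "\<And>y. k' (\<sigma> y) = k (\<sigma> y)"
    by (auto dest: fun_cong)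
  then have "(\<Sum>x\<in>B - range \<sigma>. k' x) = 0"
    using sum_split_inj_vimage[OF assms(1,2), of k'] by simp
  then have off_range: "\<forall>x\<in>B - range \<sigma>. k' x = 0"
    using assms(2) by simp
  have "k' x = k x" for x
  proof (cases "x \<in> range \<sigma>")
    case True
    then show ?thesis using on_range by blast
  next
    case False
    then have "k' x = 0" "k x = 0"
      using off_range supp assms(3,4) by (cases "x \<in> B"; blast)+
    then show ?thesis by simp
  qed
  then show "k' \<in> {k}" by auto
next
  fix k' assume "k' \<in> {k}"
  then show "k' \<in> ?fibre"
    using sum_split_inj_vimage[OF assms(1,2), of k] assms(3,4) by simp
qed

lemma lam_deg_eq_comp: "lam_deg i k = k \<circ> map_prod (skip i) id"
  by (auto simp: lam_deg_def skip_def)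

lemma rho_deg_eq_comp: "rho_deg j k = k \<circ> map_prod id (skip j)"
  by (auto simp: rho_deg_def skip_def)

lemma vimage_box_skip_fst:
  assumes "i \<in> {1..n}"
  shows "map_prod (skip i) id -` ({1..n} \<times> {1..p}) = {1..n - 1} \<times> {1..p}"
  unfolding vimage_map_prod_Times vimage_skip_atLeastAtMost[OF assms] by simp

lemma vimage_box_skip_snd:
  assumes "j \<in> {1..p}"
  shows "map_prod id (skip j) -` ({1..n} \<times> {1..p}) = {1..n} \<times> {1..p - 1}"
  unfolding vimage_map_prod_Times vimage_skip_atLeastAtMost[OF assms] by simp

lemma lam_deg_in_degs:
  assumes "i \<in> {1..n}" "k \<in> degs n p"
  shows "lam_deg i k \<in> degs (n - 1) p"
  using assms vimage_box_skip_fst[OF assms(1), of p, symmetric]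
  by (auto simp: degs_def fsupp_def lam_deg_eq_comp)

lemma rho_deg_in_degs:
  assumes "j \<in> {1..p}" "k \<in> degs n p"
  shows "rho_deg j k \<in> degs n (p - 1)"
  using assms vimage_box_skip_snd[OF assms(1), of n, symmetric]
  by (auto simp: degs_def fsupp_def rho_deg_eq_comp)

lemma lam_fibre_singleton:
  assumes "i \<in> {1..n}" "k \<in> degs n p" "column p i (fsupp k) = {}"
  shows "{k' \<in> degs n p. tdeg n p k' = tdeg (n - 1) p (lam_deg i k) \<and> lam_deg i k' = lam_deg i k} = {k}"
proof -
  let ?\<sigma> = "map_prod (skip i) (id :: nat \<Rightarrow> nat)" and ?B = "{1..n} \<times> {1..p}"
  have "\<forall>x\<in>?B - range ?\<sigma>. k x = 0"
    using assms(3) by (auto simp: range_map_prod range_skip column_def fsupp_def)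
  moreover have "tdeg (n - 1) p (lam_deg i k) = (\<Sum>y\<in>?\<sigma> -` ?B. k (?\<sigma> y))"
    unfolding tdeg_def lam_deg_eq_comp vimage_box_skip_fst[OF assms(1)] by simp
  moreover have "inj ?\<sigma>"
    by (simp add: inj_skip prod.inj_map)
  ultimately show ?thesis
    using precomp_fibre_eq_singleton[of ?\<sigma> ?B k] assms(2)
    by (simp add: degs_def fsupp_def tdeg_def lam_deg_eq_comp)
qed

lemma lie_eqv_zero_of_lam_hat:
  assumes "i \<in> {1..n}" "in_completion n p \<alpha>" "k \<in> degs n p" "column p i (fsupp k) = {}"
    and "lie_eqv (n - 1) p (lam_hat n p i \<alpha> (lam_deg i k)) Zero"
  shows "lie_eqv n p (\<alpha> k) Zero"
proof -
  have "lam_hat n p i \<alpha> (lam_deg i k) = Add (lam i (\<alpha> k)) Zero"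
    unfolding lam_hat_def lam_fibre_singleton[OF assms(1,3,4)] lsum_singleton ..
  with assms(5) have "lie_eqv (n - 1) p (lam i (\<alpha> k)) Zero"
    by (metis lie_eqv.add_zero lie_eqv.sym lie_eqv.trans)
  moreover have "skip i ` {1..n - 1} \<subseteq> {1..n}"
    using vimage_skip_atLeastAtMost[OF assms(1)] by auto
  ultimately have "lie_eqv n p (relabel (skip i) id (lam i (\<alpha> k))) Zero"
    using lie_eqv_relabel[of "n - 1" p _ Zero "skip i" id n p] inj_on_subset[OF inj_skip]
    by fastforce
  moreover have "homog (\<alpha> k) k"
    using assms(2,3) unfolding in_completion_def by blast
  then have "lie_gens (\<alpha> k) \<subseteq> fsupp k" "fsupp k \<subseteq> {1..n} \<times> {1..p}"
    using assms(3) homog_lie_gens_subset_fsupp by (auto simp: degs_def)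
  then have "relabel (skip i) id (lam i (\<alpha> k)) = \<alpha> k"
    using assms(4) by (intro relabel_skip_lam) (fastforce simp: column_def)
  ultimately show ?thesis by simp
qed

lemma rho_fibre_singleton:
  assumes "j \<in> {1..p}" "k \<in> degs n p" "line n j (fsupp k) = {}"
  shows "{k' \<in> degs n p. tdeg n p k' = tdeg n (p - 1) (rho_deg j k) \<and> rho_deg j k' = rho_deg j k} = {k}"
proof -
  let ?\<sigma> = "map_prod (id :: nat \<Rightarrow> nat) (skip j)" and ?B = "{1..n} \<times> {1..p}"
  have "\<forall>x\<in>?B - range ?\<sigma>. k x = 0"
    using assms(3) by (auto simp: range_map_prod range_skip line_def fsupp_def)
  moreover have "tdeg n (p - 1) (rho_deg j k) = (\<Sum>y\<in>?\<sigma> -` ?B. k (?\<sigma> y))"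
    unfolding tdeg_def rho_deg_eq_comp vimage_box_skip_snd[OF assms(1)] by simp
  moreover have "inj ?\<sigma>"
    by (simp add: inj_skip prod.inj_map)
  ultimately show ?thesis
    using precomp_fibre_eq_singleton[of ?\<sigma> ?B k] assms(2)
    by (simp add: degs_def fsupp_def tdeg_def rho_deg_eq_comp)
qed

lemma lie_eqv_zero_of_rho_hat:
  assumes "j \<in> {1..p}" "in_completion n p \<alpha>" "k \<in> degs n p" "line n j (fsupp k) = {}"
    and "lie_eqv n (p - 1) (rho_hat n p j \<alpha> (rho_deg j k)) Zero"
  shows "lie_eqv n p (\<alpha> k) Zero"
proof -
  have "rho_hat n p j \<alpha> (rho_deg j k) = Add (rho j (\<alpha> k)) Zero"
    unfolding rho_hat_def rho_fibre_singleton[OF assms(1,3,4)] lsum_singleton ..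
  with assms(5) have "lie_eqv n (p - 1) (rho j (\<alpha> k)) Zero"
    by (metis lie_eqv.add_zero lie_eqv.sym lie_eqv.trans)
  moreover have "skip j ` {1..p - 1} \<subseteq> {1..p}"
    using vimage_skip_atLeastAtMost[OF assms(1)] by auto
  ultimately have "lie_eqv n p (relabel id (skip j) (rho j (\<alpha> k))) Zero"
    using lie_eqv_relabel[of n "p - 1" _ Zero id "skip j" n p] inj_on_subset[OF inj_skip]
    by fastforce
  moreover have "homog (\<alpha> k) k"
    using assms(2,3) unfolding in_completion_def by blast
  then have "lie_gens (\<alpha> k) \<subseteq> fsupp k" "fsupp k \<subseteq> {1..n} \<times> {1..p}"
    using assms(3) homog_lie_gens_subset_fsupp by (auto simp: degs_def)
  then have "relabel id (skip j) (rho j (\<alpha> k)) = \<alpha> k"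
    using assms(4) by (intro relabel_skip_rho) (fastforce simp: line_def)
  ultimately show ?thesis by simp
qed

theorem lemma1p6:
  fixes n p :: nat and \<alpha> :: "fdeg \<Rightarrow> 'a::field_char_0 lie"
  assumes "1 \<le> n" and "1 \<le> p" and "in_completion n p \<alpha>"
  shows "(\<forall>i\<in>{1..n}. (\<forall>k'\<in>degs (n - 1) p. lie_eqv (n - 1) p (lam_hat n p i \<alpha> k') Zero) \<longrightarrow>
            (\<forall>k\<in>degs n p. column p i (fsupp k) = {} \<longrightarrow> lie_eqv n p (\<alpha> k) Zero))
       \<and> (\<forall>j\<in>{1..p}. (\<forall>k'\<in>degs n (p - 1). lie_eqv n (p - 1) (rho_hat n p j \<alpha> k') Zero) \<longrightarrow>
            (\<forall>k\<in>degs n p. line n j (fsupp k) = {} \<longrightarrow> lie_eqv n p (\<alpha> k) Zero))"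
proof (intro conjI ballI impI)
  fix i k
  assume "i \<in> {1..n}" "k \<in> degs n p" "column p i (fsupp k) = {}"
    and "\<forall>k'\<in>degs (n - 1) p. lie_eqv (n - 1) p (lam_hat n p i \<alpha> k') Zero"
  then show "lie_eqv n p (\<alpha> k) Zero"
    using lie_eqv_zero_of_lam_hat[OF _ assms(3)] lam_deg_in_degs by blast
next
  fix j k
  assume "j \<in> {1..p}" "k \<in> degs n p" "line n j (fsupp k) = {}"
    and "\<forall>k'\<in>degs n (p - 1). lie_eqv n (p - 1) (rho_hat n p j \<alpha> k') Zero"
  then show "lie_eqv n p (\<alpha> k) Zero"
    using lie_eqv_zero_of_rho_hat[OF _ assms(3)] rho_deg_in_degs by blast
qed

end
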